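(* In the BICM setting described in the context, with message $1$ transmitted and $\mathsf D$ the ORBGRAND metric, $$\lim_{N\to\infty}\mathbb E[\mathsf D(1)]=\frac1m\sum_{j=1}^m\Bigg(\frac12\int_{\mathcal R_{1,j}}\bar\Psi\Big(\Big|\ln\frac{q_j^+(y)}{q_j^-(y)}\Big|\Big)q_j^+(y)\,\mathrm dy+\frac12\int_{\mathcal R_{2,j}}\bar\Psi\Big(\Big|\ln\frac{q_j^+(y)}{q_j^-(y)}\Big|\Big)q_j^-(y)\,\mathrm dy\Bigg).$$
   Context: Let $m\ge1$, let $\mathcal S$ be a constellation with $|\mathcal S|=2^m$, and let $\mu:\{+1,-1\}^m\to\mathcal S$ be a bijective labeling. For $s\in\mathcal S$, let $b_j(s)$ be the $j$-th coordinate of $\mu^{-1}(s)$. The channel is memoryless with output space $\mathbb R^d$ (norm $|\cdot|$) and transition densities $p(y\mid s)$. For $j=1,\dots,m$ define $$q_j^\pm(y)=2^{-(m-1)}\sum_{s:\,b_j(s)=\pm1}p(y\mid s).$$ For each $j$, let $\mathsf X_j$ be uniform on $\{\pm1\}$ and let $\mathsf Y$ have density $q_j^{\mathsf X_j}$ given $\mathsf X_j$. Let $\Psi_j$ be the CDF of $|\ln(q_j^+(\mathsf Y)/q_j^-(\mathsf Y))|$, and let $\bar\Psi=\frac1m\sum_j\Psi_j$. Assume that for each $j$: (A1) there exist $M_1>0$, $a>0$ and a polynomial $S_1$ with $q_j^\pm(y)<S_1(|y|)e^{-a|y|}$ for $|y|>M_1$; (A2) there exist $M_2>0$ and a polynomial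 $S_2$ with $|\ln(q_j^+(y)/q_j^-(y))|<S_2(|y|)$ for $|y|>M_2$; (A3) $\Psi_j$, $\Psi_j^{-1}$, $\bar\Psi$ and $\bar\Psi^{-1}$ are smooth with finite first, second and third derivatives. Let $\mathcal R_{1,j}=\{y:q_j^+(y)<q_j^-(y)\}$ and $\mathcal R_{2,j}=\{y:q_j^+(y)>q_j^-(y)\}$. Random coding: the codebook has $\lceil e^{NR}\rceil$ codewords, each consisting of bits $\mathsf X_{i,j}(w)$, $i\le N$, $j\le m$, all i.i.d. uniform on $\{\pm1\}$. Message $1$ is transmitted. Symbol $i$ is $s_i(1)=\mu(\mathsf X_{i,1}(1),\dots,\mathsf X_{i,m}(1))$, and the outputs $\mathsf Y_i$ are conditionally independent with densities $p(\cdot\mid s_i(1))$. Let $\mathsf T_{i,j}=\ln(q_j^+(\mathsf Y_i)/q_j^-(\mathsf Y_i))$. Let $\mathsf R_{i,j}$ be the rank of $|\mathsf T_{i,j}|$ among all $mN$ values (rank $1$ is the smallest). Let $\mathrm{sgn}(t)=1$ if $t\ge0$ and $-1$ otherwise. The ORBGRAND metric is $$\mathsf D(w)=\frac1{mN}\sum_{i,j}\frac{\mathsf R_{i,j}}{mN}\mathbf 1\big(\mathrm{sgn}(\mathsf T_{i,j})\mathsf X_{i,j}(w)<0\big).$$ *)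

theory Defs
  imports "HOL-Analysis.Analysis" "HOL-Computational_Algebra.Polynomial"
begin

definition bitvecs :: "nat \<Rightarrow> (nat \<Rightarrow> real) set" where
  "bitvecs m = PiE {..<m} (\<lambda>_. {-1, 1})"

definition lab_bit :: "nat \<Rightarrow> ((nat \<Rightarrow> real) \<Rightarrow> 's) \<Rightarrow> 's \<Rightarrow> nat \<Rightarrow> real" where
  "lab_bit m \<mu> s j = inv_into (bitvecs m) \<mu> s j"

definition qbit :: "nat \<Rightarrow> 's set \<Rightarrow> ((nat \<Rightarrow> real) \<Rightarrow> 's) \<Rightarrow> ('s \<Rightarrow> 'a \<Rightarrow> real)
    \<Rightarrow> nat \<Rightarrow> real \<Rightarrow> 'a \<Rightarrow> real" where
  "qbit m S \<mu> p j b y = (1/2) ^ (m - 1) * (\<Sum>s\<in>{s\<in>S. lab_bit m \<mu> s j = b}. p s y)"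

definition llr :: "nat \<Rightarrow> 's set \<Rightarrow> ((nat \<Rightarrow> real) \<Rightarrow> 's) \<Rightarrow> ('s \<Rightarrow> 'a \<Rightarrow> real)
    \<Rightarrow> nat \<Rightarrow> 'a \<Rightarrow> real" where
  "llr m S \<mu> p j y = ln (qbit m S \<mu> p j 1 y / qbit m S \<mu> p j (-1) y)"

text \<open>\<open>\<Psi>_j(t) = P(|T| \<le> t)\<close> with \<open>X\<close> uniform on \<open>{\<plusminus>1}\<close> and \<open>Y ~ q_j^X\<close>.\<close>
definition Psi :: "nat \<Rightarrow> 's set \<Rightarrow> ((nat \<Rightarrow> real) \<Rightarrow> 's) \<Rightarrow> ('s \<Rightarrow> 'a::euclidean_space \<Rightarrow> real)
    \<Rightarrow> nat \<Rightarrow> real \<Rightarrow> real" where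
  "Psi m S \<mu> p j t =
     1/2 * set_lebesgue_integral lborel {y. \<bar>llr m S \<mu> p j y\<bar> \<le> t} (qbit m S \<mu> p j 1)
   + 1/2 * set_lebesgue_integral lborel {y. \<bar>llr m S \<mu> p j y\<bar> \<le> t} (qbit m S \<mu> p j (-1))"

definition Psibar :: "nat \<Rightarrow> 's set \<Rightarrow> ((nat \<Rightarrow> real) \<Rightarrow> 's) \<Rightarrow> ('s \<Rightarrow> 'a::euclidean_space \<Rightarrow> real)
    \<Rightarrow> real \<Rightarrow> real" where
  "Psibar m S \<mu> p t = (\<Sum>j<m. Psi m S \<mu> p j t) / real m"

definition smooth_on :: "real set \<Rightarrow> (real \<Rightarrow> real) \<Rightarrow> bool" where
  "smooth_on A f \<longleftrightarrow> (\<forall>k. \<forall>t\<in>A. ((deriv ^^ k) f) differentiable (at t))"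

definition smooth_cdf :: "(real \<Rightarrow> real) \<Rightarrow> bool" where
  "smooth_cdf F \<longleftrightarrow> smooth_on {0<..} F \<and>
     (\<exists>G. (\<forall>u\<in>{0<..<1}. G u > 0 \<and> F (G u) = u) \<and> (\<forall>t>0. G (F t) = t) \<and> smooth_on {0<..<1} G)"

definition sgnb :: "real \<Rightarrow> real" where
  "sgnb t = (if t \<ge> 0 then 1 else -1)"

text \<open>Rank (1 = smallest) of \<open>A i j\<close> among \<open>A k l\<close>, \<open>k<N, l<m\<close>; ties broken by
  lexicographic index order (ties have probability zero).\<close>
definition rank_of :: "(nat \<Rightarrow> nat \<Rightarrow> real) \<Rightarrow> nat \<Rightarrow> nat \<Rightarrow> nat \<Rightarrow> nat \<Rightarrow> nat" where
  "rank_of A N m i j = 1 + card {(k, l). k < N \<and> l < m \<and>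
      (A k l < A i j \<or> (A k l = A i j \<and> (k < i \<or> (k = i \<and> l < j))))}"

definition orbgrand_D :: "nat \<Rightarrow> nat \<Rightarrow> (nat \<Rightarrow> nat \<Rightarrow> real) \<Rightarrow> (nat \<Rightarrow> nat \<Rightarrow> real) \<Rightarrow> real" where
  "orbgrand_D N m T x = (1 / real (m * N)) *
     (\<Sum>i<N. \<Sum>j<m. (real (rank_of (\<lambda>k l. \<bar>T k l\<bar>) N m i j) / real (m * N)) *
        (if sgnb (T i j) * x i j < 0 then 1 else 0))"

text \<open>\<open>E[D(1)]\<close> at block length N: the bits of the transmitted codeword are i.i.d. uniform,
  and \<open>Y_i\<close> are conditionally independent with densities \<open>p(\<cdot>|\<mu>(x_i))\<close>.\<close>
definition expected_D :: "nat \<Rightarrow> 's set \<Rightarrow> ((nat \<Rightarrow> real) \<Rightarrow> 's) \<Rightarrow> ('s \<Rightarrow> 'a::euclidean_space \<Rightarrow> real)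
    \<Rightarrow> nat \<Rightarrow> real" where
  "expected_D m S \<mu> p N =
     (\<Sum>x\<in>PiE {..<N} (\<lambda>_. bitvecs m). (1/2) ^ (m * N) *
        integral\<^sup>L (PiM {..<N} (\<lambda>_. lborel))
          (\<lambda>y. orbgrand_D N m (\<lambda>i j. llr m S \<mu> p j (y i)) x * (\<Prod>i<N. p (\<mu> (x i)) (y i))))"

end

theory Submission
  imports Defs
begin

text \<open>Writing the rank of \<open>|T\<^sub>i\<^sub>,\<^sub>j|\<close> as one plus the number of entries preceding it,
  \<open>E[D(1)]\<close> becomes \<open>(mN)\<^sup>-\<^sup>2\<close> times a sum of expectations of products of two indicators:
  bit \<open>j\<close> of symbol \<open>i\<close> is in error, and entry \<open>(k,l)\<close> precedes it. For \<open>k \<noteq> i\<close> the outputs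
  \<open>Y\<^sub>i\<close> and \<open>Y\<^sub>k\<close> are independent and \<open>Y\<^sub>k\<close> has the mixture density of all \<open>p(\<cdot>|s)\<close>, so the
  expectation is \<open>\<integral> e\<^sub>j(u) \<Psi>\<^sub>l(|T\<^sub>j(u)|) du\<close>, where \<open>e\<^sub>j = min(q\<^sub>j\<^sup>+, q\<^sub>j\<^sup>-)/2\<close> is the density of an
  error on bit \<open>j\<close>; ties do not matter since \<open>\<Psi>\<^sub>l\<close> has no atoms. Summing over \<open>l\<close> gives
  \<open>m \<Psi>bar\<close>, and the \<open>(N-1)m\<close> such terms per entry produce the limit, while the \<open>O(m)\<close> terms
  from the entry's own symbol only contribute \<open>O(1/N)\<close>.\<close>

lemma smooth_cdf_isCont:
  assumes "smooth_cdf F" "0 < t"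
  shows "isCont F t"
proof -
  have "((deriv ^^ 0) F) differentiable (at t)"
    using assms unfolding smooth_cdf_def smooth_on_def by blast
  then show ?thesis
    by (simp add: differentiable_imp_continuous_within)
qed

lemma smooth_cdf_at_0:
  assumes F: "smooth_cdf F" "mono F" and "0 \<le> F 0" "F 0 \<le> 1"
  shows "F 0 = 0"
proof (rule ccontr)
  assume "F 0 \<noteq> 0"
  then have u: "F 0 / 2 \<in> {0<..<1}"
    using assms(3,4) by auto
  obtain G where "\<forall>u\<in>{0<..<1}. 0 < G u \<and> F (G u) = u"
    using F(1) unfolding smooth_cdf_def by blast
  with u have "0 < G (F 0 / 2)" "F (G (F 0 / 2)) = F 0 / 2"
    by auto
  then have "F 0 \<le> F 0 / 2"
    using monoD[OF F(2), of 0 "G (F 0 / 2)"] by simp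
  with \<open>0 \<le> F 0\<close> \<open>F 0 \<noteq> 0\<close> show False
    by linarith
qed

lemma isCont_le_of_less:
  fixes F :: "real \<Rightarrow> real"
  assumes "isCont F t" "\<And>s. s < t \<Longrightarrow> F s \<le> c"
  shows "F t \<le> c"
proof (rule tendsto_upperbound)
  show "(F \<longlongrightarrow> F t) (at_left t)"
    using assms(1) by (simp add: isCont_def filterlim_at_split)
  have "\<forall>\<^sub>F s in at_left t. s < t"
    by (simp add: eventually_at_filter)
  then show "\<forall>\<^sub>F s in at_left t. F s \<le> c"
    by eventually_elim (rule assms(2))
qed simp

lemma integrable_bounded_mult:
  fixes f g :: "'a \<Rightarrow> real"
  assumes "integrable M f" "g \<in> borel_measurable M" "\<And>x. \<bar>g x\<bar> \<le> 1"
  shows "integrable M (\<lambda>x. g x * f x)"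
proof (rule Bochner_Integration.integrable_bound[OF assms(1)])
  show "(\<lambda>x. g x * f x) \<in> borel_measurable M"
    using assms(1,2) by measurable
  show "AE x in M. norm (g x * f x) \<le> norm (f x)"
    using assms(3) by (auto simp: abs_mult intro!: mult_left_le_one_le)
qed

lemma real_card_pairs_eq_sum:
  fixes N M :: nat
  shows "real (card {(k, l). k < N \<and> l < M \<and> P k l}) = (\<Sum>k<N. \<Sum>l<M. if P k l then 1 else 0)"
proof -
  have pairs: "{(k, l). k < N \<and> l < M \<and> P k l} = Sigma {..<N} (\<lambda>k. {l\<in>{..<M}. P k l})"
    by auto
  have "card {(k, l). k < N \<and> l < M \<and> P k l} = (\<Sum>k<N. card {l\<in>{..<M}. P k l})"
    unfolding pairs by (rule card_SigmaI) simp_all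
  then show ?thesis
    by (simp add: sum.inter_filter[symmetric])
qed

lemma nn_integral_PiM_two_coordinates:
  fixes H :: "'a \<Rightarrow> 'a \<Rightarrow> ennreal" and \<rho> :: "'a \<Rightarrow> ennreal"
  assumes M: "sigma_finite_measure M"
    and I: "finite I" "i \<in> I" "k \<in> I" "i \<noteq> k"
    and H[measurable]: "case_prod H \<in> borel_measurable (M \<Otimes>\<^sub>M M)"
    and \<rho>[measurable]: "\<rho> \<in> borel_measurable M" and \<rho>1: "(\<integral>\<^sup>+ v. \<rho> v \<partial>M) = 1"
  shows "(\<integral>\<^sup>+ y. H (y i) (y k) * (\<Prod>n\<in>I - {i, k}. \<rho> (y n)) \<partial>PiM I (\<lambda>_. M))
       = (\<integral>\<^sup>+ u. \<integral>\<^sup>+ v. H u v \<partial>M \<partial>M)"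
proof -
  interpret product_sigma_finite "\<lambda>_. M"
    using M by (simp add: product_sigma_finite_def)
  define J where "J = I - {i, k}"
  have IJ: "I = insert i (insert k J)" "finite J" "i \<notin> insert k J" "k \<notin> J"
    using I unfolding J_def by auto
  define f where "f y = H (y i) (y k) * (\<Prod>n\<in>J. \<rho> (y n))" for y
  have f_meas: "f \<in> borel_measurable (PiM (insert i (insert k J)) (\<lambda>_. M))"
    unfolding f_def by measurable
  have prod_1: "(\<integral>\<^sup>+ z. (\<Prod>n\<in>J. \<rho> (z n)) \<partial>PiM J (\<lambda>_. M)) = 1"
    using product_nn_integral_prod[OF IJ(2), of "\<lambda>_. \<rho>"] by (simp add: \<rho>1)
  have inner: "(\<integral>\<^sup>+ x. f (x(i := u)) \<partial>PiM (insert k J) (\<lambda>_. M)) = (\<integral>\<^sup>+ v. H u v \<partial>M)"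
    if u: "u \<in> space M" for u
  proof -
    have "(\<lambda>x. x(i := u)) \<in> PiM (insert k J) (\<lambda>_. M) \<rightarrow>\<^sub>M PiM (insert i (insert k J)) (\<lambda>_. M)"
      by (rule measurable_fun_upd[where J="insert k J"]) (auto simp: u)
    then have "(\<lambda>x. f (x(i := u))) \<in> borel_measurable (PiM (insert k J) (\<lambda>_. M))"
      using f_meas by measurable
    then have "(\<integral>\<^sup>+ x. f (x(i := u)) \<partial>PiM (insert k J) (\<lambda>_. M))
        = (\<integral>\<^sup>+ v. \<integral>\<^sup>+ z. f (z(k := v, i := u)) \<partial>PiM J (\<lambda>_. M) \<partial>M)"
      using product_nn_integral_insert_rev[OF IJ(2,4)] by simp
    also have "\<dots> = (\<integral>\<^sup>+ v. H u v * (\<integral>\<^sup>+ z. (\<Prod>n\<in>J. \<rho> (z n)) \<partial>PiM J (\<lambda>_. M)) \<partial>M)"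
    proof (intro nn_integral_cong)
      fix v
      have "f (z(k := v, i := u)) = H u v * (\<Prod>n\<in>J. \<rho> (z n))" for z
        unfolding f_def using IJ I(4) by (auto intro!: arg_cong[where f="(*) _"] prod.cong)
      then show "(\<integral>\<^sup>+ z. f (z(k := v, i := u)) \<partial>PiM J (\<lambda>_. M))
          = H u v * (\<integral>\<^sup>+ z. (\<Prod>n\<in>J. \<rho> (z n)) \<partial>PiM J (\<lambda>_. M))"
        by (simp add: nn_integral_cmult)
    qed
    finally show ?thesis
      by (simp add: prod_1)
  qed
  have "(\<integral>\<^sup>+ y. H (y i) (y k) * (\<Prod>n\<in>I - {i, k}. \<rho> (y n)) \<partial>PiM I (\<lambda>_. M))
      = (\<integral>\<^sup>+ y. f y \<partial>PiM (insert i (insert k J)) (\<lambda>_. M))"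
    using IJ(1) by (simp add: f_def J_def)
  also have "\<dots> = (\<integral>\<^sup>+ u. \<integral>\<^sup>+ x. f (x(i := u)) \<partial>PiM (insert k J) (\<lambda>_. M) \<partial>M)"
    using product_nn_integral_insert_rev[OF _ IJ(3) f_meas] IJ(2) by simp
  finally show ?thesis
    by (simp add: inner cong: nn_integral_cong)
qed

section \<open>Output density and the bit-wise CDFs\<close>

locale bicm =
  fixes m :: nat and S :: "'s set" and \<mu> :: "(nat \<Rightarrow> real) \<Rightarrow> 's"
    and p :: "'s \<Rightarrow> 'a::euclidean_space \<Rightarrow> real"
  assumes m_pos: "1 \<le> m"
    and mu_bij: "bij_betw \<mu> (bitvecs m) S"
    and p_measurable: "s \<in> S \<Longrightarrow> p s \<in> borel_measurable lborel"
    and p_nonneg: "s \<in> S \<Longrightarrow> 0 \<le> p s y"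
    and p_integrable: "s \<in> S \<Longrightarrow> integrable lborel (p s)"
    and p_integral: "s \<in> S \<Longrightarrow> integral\<^sup>L lborel (p s) = 1"
    and q_pos: "j < m \<Longrightarrow> 0 < qbit m S \<mu> p j 1 y" "j < m \<Longrightarrow> 0 < qbit m S \<mu> p j (-1) y"
    and Psi_smooth: "j < m \<Longrightarrow> smooth_cdf (Psi m S \<mu> p j)"
begin

abbreviation "B \<equiv> bitvecs m"
abbreviation "q \<equiv> qbit m S \<mu> p"
abbreviation "T \<equiv> llr m S \<mu> p"
abbreviation "\<Psi> \<equiv> Psi m S \<mu> p"
abbreviation "\<Psi>bar \<equiv> Psibar m S \<mu> p"

lemma finite_bitvecs: "finite B"
  unfolding bitvecs_def by (auto intro!: finite_PiE)

lemma card_bitvecs: "card B = 2 ^ m"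
  unfolding bitvecs_def by (simp add: card_PiE numeral_2_eq_2)

lemma bitvecs_bit: "b \<in> B \<Longrightarrow> j < m \<Longrightarrow> b j = 1 \<or> b j = -1"
  unfolding bitvecs_def by (auto simp: PiE_iff)

lemma sum_bitvecs_split:
  assumes "j < m"
  shows "(\<Sum>b\<in>B. f b) = (\<Sum>b\<in>{b\<in>B. b j = 1}. f b) + (\<Sum>b\<in>{b\<in>B. b j = -1}. f b)"
proof -
  have "B = {b\<in>B. b j = 1} \<union> {b\<in>B. b j = -1}"
    using bitvecs_bit[OF _ assms] by auto
  also have "(\<Sum>b\<in>\<dots>. f b) = (\<Sum>b\<in>{b\<in>B. b j = 1}. f b) + (\<Sum>b\<in>{b\<in>B. b j = -1}. f b)"
    by (rule sum.union_disjoint) (auto intro: finite_subset[OF _ finite_bitvecs])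
  finally show ?thesis .
qed

lemma half_power_m: "(1/2 :: real) ^ m = 1/2 * (1/2) ^ (m - 1)"
  using m_pos by (simp add: power_eq_if)

lemma mu_mem: "b \<in> B \<Longrightarrow> \<mu> b \<in> S"
  using mu_bij by (auto simp: bij_betw_def)

lemma lab_bit_mu: "b \<in> B \<Longrightarrow> lab_bit m \<mu> (\<mu> b) j = b j"
  using mu_bij unfolding lab_bit_def bij_betw_def by (simp add: inv_into_f_f)

lemma p_mu_measurable[measurable]: "b \<in> B \<Longrightarrow> p (\<mu> b) \<in> borel_measurable lborel"
  using mu_mem p_measurable by blast

lemma p_mu_nonneg: "b \<in> B \<Longrightarrow> 0 \<le> p (\<mu> b) y"
  by (simp add: mu_mem p_nonneg)

lemma p_mu_integrable: "b \<in> B \<Longrightarrow> integrable lborel (p (\<mu> b))"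
  by (simp add: mu_mem p_integrable)

lemma p_mu_nn_integral: "b \<in> B \<Longrightarrow> (\<integral>\<^sup>+ y. ennreal (p (\<mu> b) y) \<partial>lborel) = 1"
  by (simp add: nn_integral_eq_integral p_mu_integrable p_mu_nonneg mu_mem p_integral)

lemma q_eq_sum_bitvecs: "q j \<beta> y = (1/2) ^ (m - 1) * (\<Sum>b\<in>{b\<in>B. b j = \<beta>}. p (\<mu> b) y)"
proof -
  have "inj_on \<mu> {b\<in>B. b j = \<beta>}"
    using mu_bij unfolding bij_betw_def by (auto intro: inj_on_subset)
  moreover have "{s\<in>S. lab_bit m \<mu> s j = \<beta>} = \<mu> ` {b\<in>B. b j = \<beta>}"
    using mu_bij by (force simp: bij_betw_def lab_bit_mu)
  ultimately show ?thesis
    unfolding qbit_def by (simp add: sum.reindex)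
qed

definition out_density :: "'a \<Rightarrow> real" where
  "out_density y = (1/2) ^ m * (\<Sum>b\<in>B. p (\<mu> b) y)"

lemma q_add: "j < m \<Longrightarrow> q j 1 y + q j (-1) y = 2 * out_density y"
  unfolding q_eq_sum_bitvecs out_density_def half_power_m
  by (subst sum_bitvecs_split) (simp_all add: distrib_left)

lemma out_density_measurable[measurable]: "out_density \<in> borel_measurable lborel"
  unfolding out_density_def by measurable

lemma q_measurable[measurable]: "q j \<beta> \<in> borel_measurable lborel"
  unfolding q_eq_sum_bitvecs by measurable

lemma T_measurable[measurable]: "T j \<in> borel_measurable lborel"
  unfolding llr_def by measurable

lemma out_density_nonneg: "0 \<le> out_density y"
  unfolding out_density_def by (auto intro!: mult_nonneg_nonneg sum_nonneg p_mu_nonneg)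

lemma out_density_integrable: "integrable lborel out_density"
  unfolding out_density_def by (auto intro!: p_mu_integrable)

lemma q_integrable: "integrable lborel (q j \<beta>)"
  unfolding q_eq_sum_bitvecs by (auto intro!: p_mu_integrable)

lemma out_density_integral: "integral\<^sup>L lborel out_density = 1"
proof -
  have "integral\<^sup>L lborel out_density = (1/2) ^ m * (\<Sum>b\<in>B. integral\<^sup>L lborel (p (\<mu> b)))"
    unfolding out_density_def by (simp add: p_mu_integrable)
  also have "\<dots> = 1"
    by (simp add: mu_mem p_integral card_bitvecs power_one_over)
  finally show ?thesis .
qed

lemma out_density_nn_integral: "(\<integral>\<^sup>+ y. ennreal (out_density y) \<partial>lborel) = 1"
  by (simp add: nn_integral_eq_integral out_density_integrable out_density_nonneg out_density_integral)

lemma Psi_eq_integral: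
  assumes j: "j < m"
  shows "\<Psi> j t = (\<integral>v. indicator {v. \<bar>T j v\<bar> \<le> t} v * out_density v \<partial>lborel)"
proof -
  let ?A = "{v. \<bar>T j v\<bar> \<le> t}"
  have A: "?A \<in> sets lborel"
    by measurable
  have "out_density v = 1/2 * q j 1 v + 1/2 * q j (-1) v" for v
    using q_add[OF j, of v] by simp
  then have "(\<lambda>v. indicator ?A v * out_density v)
      = (\<lambda>v. 1/2 * (indicator ?A v * q j 1 v) + 1/2 * (indicator ?A v * q j (-1) v))"
    by (simp add: fun_eq_iff algebra_simps)
  then show ?thesis
    unfolding Psi_def set_lebesgue_integral_def
    by (simp add: integrable_mult_indicator[OF A q_integrable, simplified])
qed

lemma Psi_nonneg: "j < m \<Longrightarrow> 0 \<le> \<Psi> j t"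
  by (simp add: Psi_eq_integral out_density_nonneg)

lemma integrable_out_density_mult:
  "g \<in> borel_measurable lborel \<Longrightarrow> (\<And>v. \<bar>g v\<bar> \<le> 1) \<Longrightarrow> integrable lborel (\<lambda>v. g v * out_density v)"
  by (rule integrable_bounded_mult[OF out_density_integrable])

lemma Psi_mono: "j < m \<Longrightarrow> mono (\<Psi> j)"
  unfolding mono_def Psi_eq_integral
  by (auto intro!: integral_mono integrable_out_density_mult out_density_nonneg
      simp: indicator_def)

lemma Psi_le_1: "j < m \<Longrightarrow> \<Psi> j t \<le> 1"
  unfolding Psi_eq_integral
  using integral_mono[OF integrable_out_density_mult out_density_integrable, of "indicator {v. \<bar>T j v\<bar> \<le> t}"]
  by (simp add: out_density_integral out_density_nonneg indicator_def)

lemma Psi_0: "j < m \<Longrightarrow> \<Psi> j 0 = 0"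
  by (rule smooth_cdf_at_0) (simp_all add: Psi_smooth Psi_mono Psi_nonneg Psi_le_1)

lemma Psi_measurable[measurable]: "j < m \<Longrightarrow> \<Psi> j \<in> borel_measurable borel"
  by (rule borel_measurable_mono) (rule Psi_mono)

text \<open>As \<open>\<Psi>\<^sub>l\<close> is continuous on \<open>(0,\<infinity>)\<close> and vanishes at \<open>0\<close>, the event \<open>|T\<^sub>l| = t\<close> is null,
  so ties may be broken arbitrarily.\<close>
lemma integral_llr_less_or_tie:
  assumes l: "l < m" and t: "0 \<le> t"
  shows "(\<integral>v. (if \<bar>T l v\<bar> < t \<or> (\<bar>T l v\<bar> = t \<and> \<beta>) then 1 else 0) * out_density v \<partial>lborel) = \<Psi> l t"
    (is "?I = _")
proof (rule antisym)
  show "?I \<le> \<Psi> l t"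
    unfolding Psi_eq_integral[OF l]
    by (intro integral_mono integrable_out_density_mult)
      (auto simp: out_density_nonneg indicator_def)
  have below: "\<Psi> l s \<le> ?I" if "s < t" for s
    unfolding Psi_eq_integral[OF l] using that
    by (intro integral_mono integrable_out_density_mult)
      (auto simp: out_density_nonneg indicator_def)
  show "\<Psi> l t \<le> ?I"
  proof (cases "t = 0")
    case True
    then show ?thesis
      by (simp add: Psi_0[OF l] out_density_nonneg)
  next
    case False
    with t Psi_smooth[OF l] have "isCont (\<Psi> l) t"
      by (simp add: smooth_cdf_isCont)
    then show ?thesis
      using below by (rule isCont_le_of_less)
  qed
qed

section \<open>Expectation over the random codeword\<close>

definition codewords :: "nat \<Rightarrow> (nat \<Rightarrow> nat \<Rightarrow> real) set" where
  "codewords N = PiE {..<N} (\<lambda>_. B)"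

abbreviation outputs :: "nat \<Rightarrow> (nat \<Rightarrow> 'a) measure" where
  "outputs N \<equiv> PiM {..<N} (\<lambda>_. lborel)"

definition cond_density :: "nat \<Rightarrow> (nat \<Rightarrow> nat \<Rightarrow> real) \<Rightarrow> (nat \<Rightarrow> 'a) \<Rightarrow> real" where
  "cond_density N x y = (\<Prod>n<N. p (\<mu> (x n)) (y n))"

definition expect :: "nat \<Rightarrow> ((nat \<Rightarrow> nat \<Rightarrow> real) \<Rightarrow> (nat \<Rightarrow> 'a) \<Rightarrow> real) \<Rightarrow> real" where
  "expect N f = (\<Sum>x\<in>codewords N. (1/2) ^ (m * N) * (\<integral>y. f x y * cond_density N x y \<partial>outputs N))"

definition expect_integrable :: "nat \<Rightarrow> ((nat \<Rightarrow> nat \<Rightarrow> real) \<Rightarrow> (nat \<Rightarrow> 'a) \<Rightarrow> real) \<Rightarrow> bool" where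
  "expect_integrable N f \<longleftrightarrow> (\<forall>x\<in>codewords N. integrable (outputs N) (\<lambda>y. f x y * cond_density N x y))"

lemma expected_D_eq_expect:
  "expected_D m S \<mu> p N = expect N (\<lambda>x y. orbgrand_D N m (\<lambda>i j. T j (y i)) x)"
  unfolding expected_D_def expect_def codewords_def cond_density_def ..

lemma codewords_symbol: "x \<in> codewords N \<Longrightarrow> n < N \<Longrightarrow> x n \<in> B"
  unfolding codewords_def by auto

lemma card_codewords: "card (codewords N) = 2 ^ (m * N)"
  unfolding codewords_def by (simp add: card_PiE card_bitvecs power_mult)

lemma measurable_output: "n < N \<Longrightarrow> (\<lambda>y. y n) \<in> outputs N \<rightarrow>\<^sub>M lborel"
  using measurable_component_singleton[of n "{..<N}" "\<lambda>_. lborel"] by simp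

lemma measurable_two_outputs:
  assumes "i < N" "k < N" "(\<lambda>(u, v). g u v) \<in> borel_measurable (lborel \<Otimes>\<^sub>M lborel)"
  shows "(\<lambda>y. g (y i) (y k)) \<in> borel_measurable (outputs N)"
  using measurable_compose[OF measurable_Pair[OF measurable_output measurable_output] assms(3)] assms(1,2)
  by simp

lemma cond_density_measurable[measurable]:
  "x \<in> codewords N \<Longrightarrow> cond_density N x \<in> borel_measurable (outputs N)"
  unfolding cond_density_def[abs_def] by (auto intro!: borel_measurable_prod simp: codewords_symbol)

lemma cond_density_nonneg: "x \<in> codewords N \<Longrightarrow> 0 \<le> cond_density N x y"
  unfolding cond_density_def by (auto intro!: prod_nonneg p_mu_nonneg codewords_symbol)

lemma cond_density_nn_integral:
  assumes x: "x \<in> codewords N"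
  shows "(\<integral>\<^sup>+ y. ennreal (cond_density N x y) \<partial>outputs N) = 1"
proof -
  interpret product_sigma_finite "\<lambda>_. lborel :: 'a measure"
    by standard
  have "(\<integral>\<^sup>+ y. ennreal (cond_density N x y) \<partial>outputs N)
      = (\<integral>\<^sup>+ y. (\<Prod>n<N. ennreal (p (\<mu> (x n)) (y n))) \<partial>outputs N)"
    unfolding cond_density_def
    by (intro nn_integral_cong) (subst prod_ennreal, auto simp: p_mu_nonneg codewords_symbol[OF x])
  also have "\<dots> = (\<Prod>n<N. \<integral>\<^sup>+ y. ennreal (p (\<mu> (x n)) y) \<partial>lborel)"
  proof (rule product_nn_integral_prod)
    fix n assume "n \<in> {..<N}"
    then have [measurable]: "p (\<mu> (x n)) \<in> borel_measurable lborel"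
      using codewords_symbol[OF x] p_mu_measurable by blast
    show "(\<lambda>y. ennreal (p (\<mu> (x n)) y)) \<in> borel_measurable lborel"
      by measurable
  qed simp
  also have "\<dots> = 1"
    by (simp add: p_mu_nn_integral codewords_symbol[OF x])
  finally show ?thesis .
qed

lemma cond_density_integrable: "x \<in> codewords N \<Longrightarrow> integrable (outputs N) (cond_density N x)"
  by (rule integrableI_nonneg) (simp_all add: cond_density_nonneg cond_density_nn_integral)

lemma cond_density_integral: "x \<in> codewords N \<Longrightarrow> (\<integral>y. cond_density N x y \<partial>outputs N) = 1"
  using nn_integral_eq_integral[OF cond_density_integrable] cond_density_nn_integral
  by (simp add: cond_density_nonneg)

lemma expect_integrable_bounded:
  assumes "\<And>x. x \<in> codewords N \<Longrightarrow> f x \<in> borel_measurable (outputs N)"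
    and "\<And>x y. x \<in> codewords N \<Longrightarrow> \<bar>f x y\<bar> \<le> 1"
  shows "expect_integrable N f"
  unfolding expect_integrable_def
  using assms by (auto intro!: integrable_bounded_mult cond_density_integrable)

lemma expect_integrable_add:
  "expect_integrable N f \<Longrightarrow> expect_integrable N g \<Longrightarrow> expect_integrable N (\<lambda>x y. f x y + g x y)"
  unfolding expect_integrable_def by (auto simp: distrib_right)

lemma expect_integrable_sum:
  "finite I \<Longrightarrow> (\<And>i. i \<in> I \<Longrightarrow> expect_integrable N (f i))
    \<Longrightarrow> expect_integrable N (\<lambda>x y. \<Sum>i\<in>I. f i x y)"
  unfolding expect_integrable_def by (auto simp: sum_distrib_right)

lemma expect_add:
  "expect_integrable N f \<Longrightarrow> expect_integrable N g
    \<Longrightarrow> expect N (\<lambda>x y. f x y + g x y) = expect N f + expect N g"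
  unfolding expect_integrable_def expect_def
  by (simp add: distrib_right distrib_left sum.distrib cong: sum.cong)

lemma expect_cmult: "expect N (\<lambda>x y. c * f x y) = c * expect N f"
  unfolding expect_def by (simp add: sum_distrib_left mult.assoc mult.left_commute)

lemma expect_sum:
  assumes "finite I" "\<And>i. i \<in> I \<Longrightarrow> expect_integrable N (f i)"
  shows "expect N (\<lambda>x y. \<Sum>i\<in>I. f i x y) = (\<Sum>i\<in>I. expect N (f i))"
  using assms
proof (induction I rule: finite_induct)
  case empty
  then show ?case
    by (simp add: expect_def)
next
  case (insert a I)
  then show ?case
    by (simp add: expect_add expect_integrable_sum)
qed

lemma expect_1: "expect N (\<lambda>x y. 1) = 1"
  unfolding expect_def
  by (simp add: cond_density_integral card_codewords power_one_over power_divide)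

lemma expect_unit_interval:
  assumes "\<And>x. x \<in> codewords N \<Longrightarrow> f x \<in> borel_measurable (outputs N)"
    and "\<And>x y. x \<in> codewords N \<Longrightarrow> 0 \<le> f x y" "\<And>x y. x \<in> codewords N \<Longrightarrow> f x y \<le> 1"
  shows "0 \<le> expect N f" "expect N f \<le> 1"
proof -
  show "0 \<le> expect N f"
    unfolding expect_def using assms(2)
    by (auto intro!: sum_nonneg mult_nonneg_nonneg Bochner_Integration.integral_nonneg cond_density_nonneg)
  have "expect N f \<le> expect N (\<lambda>x y. 1)"
    unfolding expect_def using assms
    by (auto intro!: sum_mono mult_left_mono integral_mono integrable_bounded_mult
        cond_density_integrable mult_left_le_one_le cond_density_nonneg)
  then show "expect N f \<le> 1"
    by (simp add: expect_1)
qed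

text \<open>Summing out the codeword bits of all symbols but the \<open>i\<close>-th turns their channel densities
  into the output density, so distinct outputs \<open>Y\<^sub>i\<close>, \<open>Y\<^sub>k\<close> become independent.\<close>
lemma sum_codewords_two_symbols:
  assumes ik: "i < N" "k < N" "i \<noteq> k"
  shows "(\<Sum>x\<in>codewords N. (1/2) ^ (m * N) * (g (x i) (y i) (y k) * cond_density N x y))
     = (\<Sum>b\<in>B. (1/2) ^ m * g b (y i) (y k) * p (\<mu> b) (y i)) * out_density (y k)
         * (\<Prod>n\<in>{..<N} - {i, k}. out_density (y n))"
proof -
  define h where "h n b = (1/2) ^ m * (if n = i then g b (y i) (y k) else 1) * p (\<mu> b) (y n)" for n b
  have "(1/2) ^ (m * N) * (g (x i) (y i) (y k) * cond_density N x y) = (\<Prod>n<N. h n (x n))" for x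
    using ik unfolding h_def cond_density_def
    by (simp add: prod.distrib power_mult prod.delta)
  then have "(\<Sum>x\<in>codewords N. (1/2) ^ (m * N) * (g (x i) (y i) (y k) * cond_density N x y))
      = (\<Prod>n<N. \<Sum>b\<in>B. h n b)"
    unfolding codewords_def by (simp add: prod_sum_PiE finite_bitvecs)
  also have "\<dots> = (\<Sum>b\<in>B. h i b) * (\<Sum>b\<in>B. h k b) * (\<Prod>n\<in>{..<N} - {i, k}. \<Sum>b\<in>B. h n b)"
    using ik by (simp add: prod.remove[of _ i] prod.remove[of _ k] Diff_insert2[symmetric] mult.assoc)
  also have "\<dots> = (\<Sum>b\<in>B. (1/2) ^ m * g b (y i) (y k) * p (\<mu> b) (y i)) * out_density (y k)
         * (\<Prod>n\<in>{..<N} - {i, k}. out_density (y n))"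
    using ik by (simp add: h_def out_density_def sum_distrib_left)
  finally show ?thesis .
qed

lemma expect_two_symbols:
  assumes ik: "i < N" "k < N" "i \<noteq> k"
    and g_meas: "\<And>b. b \<in> B \<Longrightarrow> (\<lambda>(u, v). g b u v) \<in> borel_measurable (lborel \<Otimes>\<^sub>M lborel)"
    and g_01: "\<And>b u v. 0 \<le> g b u v" "\<And>b u v. g b u v \<le> 1"
  shows "expect N (\<lambda>x y. g (x i) (y i) (y k))
     = enn2real (\<integral>\<^sup>+ u. \<integral>\<^sup>+ v. ennreal ((\<Sum>b\<in>B. (1/2) ^ m * g b u v * p (\<mu> b) u) * out_density v)
         \<partial>lborel \<partial>lborel)"
proof -
  define H where "H u v = (\<Sum>b\<in>B. (1/2) ^ m * g b u v * p (\<mu> b) u) * out_density v" for u v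
  have g_meas'[measurable]: "(\<lambda>z. g b (fst z) (snd z)) \<in> borel_measurable (lborel \<Otimes>\<^sub>M lborel)"
    if "b \<in> B" for b
    using g_meas[OF that] by (simp add: split_beta')
  have H_meas[measurable]: "(\<lambda>(u, v). H u v) \<in> borel_measurable (lborel \<Otimes>\<^sub>M lborel)"
    unfolding H_def split_beta' by measurable
  have H_nonneg: "0 \<le> H u v" for u v
    unfolding H_def by (auto intro!: mult_nonneg_nonneg sum_nonneg g_01 p_mu_nonneg out_density_nonneg)
  have integrable: "expect_integrable N (\<lambda>x y. g (x i) (y i) (y k))"
  proof (rule expect_integrable_bounded)
    fix x y assume x: "x \<in> codewords N"
    show "(\<lambda>y. g (x i) (y i) (y k)) \<in> borel_measurable (outputs N)"
      by (rule measurable_two_outputs[OF ik(1,2) g_meas[OF codewords_symbol[OF x ik(1)]]])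
    show "\<bar>g (x i) (y i) (y k)\<bar> \<le> 1"
      using g_01 by (simp add: abs_le_iff order_trans[OF _ g_01(1)])
  qed
  have "expect N (\<lambda>x y. g (x i) (y i) (y k))
      = (\<integral>y. (\<Sum>x\<in>codewords N. (1/2) ^ (m * N) * (g (x i) (y i) (y k) * cond_density N x y)) \<partial>outputs N)"
    unfolding expect_def
    by (subst Bochner_Integration.integral_sum) (use integrable in \<open>auto simp: expect_integrable_def\<close>)
  also have "\<dots> = (\<integral>y. H (y i) (y k) * (\<Prod>n\<in>{..<N} - {i, k}. out_density (y n)) \<partial>outputs N)"
    by (simp add: sum_codewords_two_symbols[OF ik] H_def)
  also have "\<dots> = enn2real (\<integral>\<^sup>+ y. ennreal (H (y i) (y k) * (\<Prod>n\<in>{..<N} - {i, k}. out_density (y n))) \<partial>outputs N)"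
    using ik by (intro integral_eq_nn_integral) (auto intro!: mult_nonneg_nonneg prod_nonneg H_nonneg out_density_nonneg)
  also have "\<dots> = enn2real (\<integral>\<^sup>+ y. ennreal (H (y i) (y k)) * (\<Prod>n\<in>{..<N} - {i, k}. ennreal (out_density (y n))) \<partial>outputs N)"
    by (simp add: ennreal_mult H_nonneg prod_nonneg out_density_nonneg prod_ennreal)
  also have "\<dots> = enn2real (\<integral>\<^sup>+ u. \<integral>\<^sup>+ v. ennreal (H u v) \<partial>lborel \<partial>lborel)"
  proof (intro arg_cong[where f=enn2real] nn_integral_PiM_two_coordinates)
    show "(\<lambda>v. ennreal (out_density v)) \<in> borel_measurable lborel"
      by measurable
  qed (use ik in \<open>simp_all add: sigma_finite_lborel out_density_nn_integral\<close>)
  finally show ?thesis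
    unfolding H_def .
qed

section \<open>Error and rank indicators\<close>

definition bit_error :: "(nat \<Rightarrow> real) \<Rightarrow> nat \<Rightarrow> 'a \<Rightarrow> real" where
  "bit_error b j u = (if sgnb (T j u) * b j < 0 then 1 else 0)"

definition llr_precedes :: "bool \<Rightarrow> nat \<Rightarrow> nat \<Rightarrow> 'a \<Rightarrow> 'a \<Rightarrow> real" where
  "llr_precedes tie l j v u = (if \<bar>T l v\<bar> < \<bar>T j u\<bar> \<or> (\<bar>T l v\<bar> = \<bar>T j u\<bar> \<and> tie) then 1 else 0)"

definition error_density :: "nat \<Rightarrow> 'a \<Rightarrow> real" where
  "error_density j u = (\<Sum>b\<in>B. (1/2) ^ m * bit_error b j u * p (\<mu> b) u)"

lemma bit_error_measurable[measurable]: "bit_error b j \<in> borel_measurable lborel"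
  unfolding bit_error_def[abs_def] sgnb_def by measurable

lemma bit_error_llr_precedes_measurable:
  "(\<lambda>(u, v). bit_error b j u * llr_precedes tie l j v u) \<in> borel_measurable (lborel \<Otimes>\<^sub>M lborel)"
  unfolding bit_error_def llr_precedes_def sgnb_def split_beta' by measurable

lemma error_density_measurable[measurable]: "error_density j \<in> borel_measurable lborel"
  unfolding error_density_def[abs_def] by measurable

lemma error_density_nonneg: "0 \<le> error_density j u"
  unfolding error_density_def bit_error_def
  by (auto intro!: sum_nonneg mult_nonneg_nonneg p_mu_nonneg)

lemma llr_neg_iff: "j < m \<Longrightarrow> T j u < 0 \<longleftrightarrow> q j 1 u < q j (-1) u"
  using q_pos[of j u] unfolding llr_def by (simp add: divide_less_eq)

text \<open>The bit-\<open>j\<close> hard decision errs exactly when the transmitted bit has the smaller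
  likelihood.\<close>
lemma error_density_eq_min:
  assumes j: "j < m"
  shows "error_density j u = min (q j 1 u) (q j (-1) u) / 2"
proof -
  have sgn: "sgnb (T j u) = (if q j 1 u < q j (-1) u then -1 else 1)"
    using llr_neg_iff[OF j, of u] unfolding sgnb_def by auto
  have err: "bit_error b j u = (if q j 1 u < q j (-1) u then 1 else 0)" if "b j = 1" for b
    using that by (simp add: bit_error_def sgn)
  have err': "bit_error b j u = (if q j 1 u < q j (-1) u then 0 else 1)" if "b j = -1" for b
    using that by (simp add: bit_error_def sgn)
  have "error_density j u
      = (1/2) ^ m * (if q j 1 u < q j (-1) u then 1 else 0) * (\<Sum>b\<in>{b\<in>B. b j = 1}. p (\<mu> b) u)
      + (1/2) ^ m * (if q j 1 u < q j (-1) u then 0 else 1) * (\<Sum>b\<in>{b\<in>B. b j = -1}. p (\<mu> b) u)"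
    unfolding error_density_def sum_bitvecs_split[OF j] by (simp add: sum_distrib_left err err')
  then show ?thesis
    unfolding q_eq_sum_bitvecs half_power_m by (auto simp: min_def)
qed

lemma error_density_integrable:
  assumes "j < m"
  shows "integrable lborel (error_density j)"
proof -
  have "error_density j = (\<lambda>u. min (q j 1 u) (q j (-1) u) / 2)"
    using error_density_eq_min[OF assms] by auto
  then show ?thesis
    by (simp add: q_integrable)
qed

lemma nn_integral_llr_precedes:
  assumes "l < m"
  shows "(\<integral>\<^sup>+ v. ennreal (llr_precedes tie l j v u * out_density v) \<partial>lborel) = ennreal (\<Psi> l \<bar>T j u\<bar>)"
proof -
  have "(\<lambda>v. llr_precedes tie l j v u) \<in> borel_measurable lborel"
    unfolding llr_precedes_def by measurable
  then have "integrable lborel (\<lambda>v. llr_precedes tie l j v u * out_density v)"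
    by (rule integrable_out_density_mult) (simp add: llr_precedes_def)
  then show ?thesis
    using integral_llr_less_or_tie[OF assms, of "\<bar>T j u\<bar>" tie]
    by (simp add: nn_integral_eq_integral llr_precedes_def out_density_nonneg)
qed

lemma expect_rank_term_distinct:
  assumes ik: "i < N" "k < N" "i \<noteq> k" and j: "j < m" and l: "l < m"
  shows "expect N (\<lambda>x y. llr_precedes tie l j (y k) (y i) * bit_error (x i) j (y i))
    = (\<integral>u. error_density j u * \<Psi> l \<bar>T j u\<bar> \<partial>lborel)"
proof -
  have "expect N (\<lambda>x y. llr_precedes tie l j (y k) (y i) * bit_error (x i) j (y i))
      = enn2real (\<integral>\<^sup>+ u. \<integral>\<^sup>+ v. ennreal ((\<Sum>b\<in>B. (1/2) ^ m * (bit_error b j u * llr_precedes tie l j v u)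
          * p (\<mu> b) u) * out_density v) \<partial>lborel \<partial>lborel)"
    using expect_two_symbols[OF ik, of "\<lambda>b u v. bit_error b j u * llr_precedes tie l j v u"]
    by (simp add: mult.commute bit_error_llr_precedes_measurable)
      (simp_all add: bit_error_def llr_precedes_def)
  also have "\<dots> = enn2real (\<integral>\<^sup>+ u. ennreal (error_density j u) * ennreal (\<Psi> l \<bar>T j u\<bar>) \<partial>lborel)"
  proof (intro arg_cong[where f=enn2real] nn_integral_cong)
    fix u
    have split: "(\<Sum>b\<in>B. (1/2) ^ m * (bit_error b j u * llr_precedes tie l j v u) * p (\<mu> b) u) * out_density v
        = error_density j u * (llr_precedes tie l j v u * out_density v)" for v
      unfolding error_density_def by (simp add: sum_distrib_right sum_distrib_left mult_ac)
    have split_ennreal: "ennreal (error_density j u * (llr_precedes tie l j v u * out_density v))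
        = ennreal (error_density j u) * ennreal (llr_precedes tie l j v u * out_density v)" for v
      by (simp add: ennreal_mult error_density_nonneg llr_precedes_def out_density_nonneg)
    have "(\<lambda>v. ennreal (llr_precedes tie l j v u * out_density v)) \<in> borel_measurable lborel"
      unfolding llr_precedes_def by measurable
    then show "(\<integral>\<^sup>+ v. ennreal ((\<Sum>b\<in>B. (1/2) ^ m * (bit_error b j u * llr_precedes tie l j v u)
          * p (\<mu> b) u) * out_density v) \<partial>lborel) = ennreal (error_density j u) * ennreal (\<Psi> l \<bar>T j u\<bar>)"
      unfolding split split_ennreal by (simp only: nn_integral_cmult nn_integral_llr_precedes[OF l])
  qed
  also have "\<dots> = enn2real (\<integral>\<^sup>+ u. ennreal (error_density j u * \<Psi> l \<bar>T j u\<bar>) \<partial>lborel)"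
    using l by (simp add: ennreal_mult error_density_nonneg Psi_nonneg)
  also have "\<dots> = (\<integral>u. error_density j u * \<Psi> l \<bar>T j u\<bar> \<partial>lborel)"
  proof (rule integral_eq_nn_integral[symmetric])
    note Psi_measurable[OF l, measurable]
    show "(\<lambda>u. error_density j u * \<Psi> l \<bar>T j u\<bar>) \<in> borel_measurable lborel"
      by measurable
  qed (use l in \<open>simp add: error_density_nonneg Psi_nonneg\<close>)
  finally show ?thesis .
qed

section \<open>Asymptotics of the expected metric\<close>

lemma Psibar_eq_sum: "real m * \<Psi>bar t = (\<Sum>l<m. \<Psi> l t)"
  unfolding Psibar_def using m_pos by simp

lemma Psibar_0: "\<Psi>bar 0 = 0"
  unfolding Psibar_def by (simp add: Psi_0)

lemma Psibar_nonneg: "0 \<le> \<Psi>bar t"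
  unfolding Psibar_def by (auto intro!: sum_nonneg divide_nonneg_nonneg Psi_nonneg)

lemma Psibar_le_1: "\<Psi>bar t \<le> 1"
proof -
  have "(\<Sum>l<m. \<Psi> l t) \<le> (\<Sum>l<m. 1)"
    by (rule sum_mono) (simp add: Psi_le_1)
  then show ?thesis
    unfolding Psibar_def using m_pos by (simp add: divide_le_eq)
qed

lemma Psibar_measurable[measurable]: "\<Psi>bar \<in> borel_measurable borel"
proof (rule borel_measurable_mono)
  show "mono \<Psi>bar"
    unfolding mono_def Psibar_def
    by (auto intro!: divide_right_mono sum_mono monoD[OF Psi_mono])
qed

definition bit_limit :: "nat \<Rightarrow> real" where
  "bit_limit j = (\<integral>u. error_density j u * \<Psi>bar \<bar>T j u\<bar> \<partial>lborel)"

lemma sum_integrals_Psi_eq_bit_limit: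
  assumes j: "j < m"
  shows "(\<Sum>l<m. \<integral>u. error_density j u * \<Psi> l \<bar>T j u\<bar> \<partial>lborel) = real m * bit_limit j"
proof -
  have "integrable lborel (\<lambda>u. error_density j u * \<Psi> l \<bar>T j u\<bar>)" if l: "l < m" for l
  proof -
    note Psi_measurable[OF l, measurable]
    have "integrable lborel (\<lambda>u. \<Psi> l \<bar>T j u\<bar> * error_density j u)"
      by (rule integrable_bounded_mult[OF error_density_integrable[OF j]])
        (measurable, simp add: Psi_nonneg Psi_le_1 l)
    then show ?thesis
      by (simp add: mult.commute)
  qed
  then have "(\<Sum>l<m. \<integral>u. error_density j u * \<Psi> l \<bar>T j u\<bar> \<partial>lborel)
      = (\<integral>u. error_density j u * (\<Sum>l<m. \<Psi> l \<bar>T j u\<bar>) \<partial>lborel)"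
    by (simp add: sum_distrib_left)
  also have "\<dots> = real m * bit_limit j"
    unfolding bit_limit_def Psibar_eq_sum[symmetric] by (simp add: mult.left_commute)
  finally show ?thesis .
qed

text \<open>On the tie set \<open>q\<^sub>j\<^sup>+ = q\<^sub>j\<^sup>-\<close> the LLR vanishes and \<open>\<Psi>bar 0 = 0\<close>, so it may be dropped.\<close>
lemma bit_limit_eq_set_integrals:
  assumes j: "j < m"
  shows "bit_limit j =
       1/2 * set_lebesgue_integral lborel {y. q j 1 y < q j (-1) y} (\<lambda>y. \<Psi>bar \<bar>T j y\<bar> * q j 1 y)
     + 1/2 * set_lebesgue_integral lborel {y. q j 1 y > q j (-1) y} (\<lambda>y. \<Psi>bar \<bar>T j y\<bar> * q j (-1) y)"
proof -
  let ?A = "{y. q j 1 y < q j (-1) y}" and ?A' = "{y. q j 1 y > q j (-1) y}"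
  let ?f = "\<lambda>\<beta> y. \<Psi>bar \<bar>T j y\<bar> * q j \<beta> y"
  have sets: "?A \<in> sets lborel" "?A' \<in> sets lborel"
    by (measurable, measurable)
  have f_integrable: "integrable lborel (?f \<beta>)" for \<beta>
    by (rule integrable_bounded_mult[OF q_integrable]) (measurable, simp add: Psibar_nonneg Psibar_le_1)
  have integrable: "integrable lborel (\<lambda>y. indicator ?A y * ?f 1 y)"
      "integrable lborel (\<lambda>y. indicator ?A' y * ?f (-1) y)"
    using integrable_mult_indicator[OF sets(1) f_integrable] integrable_mult_indicator[OF sets(2) f_integrable]
    by simp_all
  have pointwise: "error_density j u * \<Psi>bar \<bar>T j u\<bar>
      = 1/2 * (indicator ?A u * ?f 1 u) + 1/2 * (indicator ?A' u * ?f (-1) u)" for u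
  proof -
    consider "q j 1 u < q j (-1) u" | "q j 1 u > q j (-1) u" | "q j 1 u = q j (-1) u"
      using less_linear by blast
    then show ?thesis
    proof cases
      case 3
      then have "T j u = 0"
        unfolding llr_def using q_pos[OF j] by simp
      then show ?thesis
        by (simp add: Psibar_0)
    qed (simp_all add: error_density_eq_min[OF j] indicator_def min_def)
  qed
  have "bit_limit j = (\<integral>u. 1/2 * (indicator ?A u * ?f 1 u) + 1/2 * (indicator ?A' u * ?f (-1) u) \<partial>lborel)"
    unfolding bit_limit_def pointwise ..
  also have "\<dots> = 1/2 * (\<integral>u. indicator ?A u * ?f 1 u \<partial>lborel) + 1/2 * (\<integral>u. indicator ?A' u * ?f (-1) u \<partial>lborel)"
    using integrable by (subst Bochner_Integration.integral_add) simp_all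
  finally show ?thesis
    unfolding set_lebesgue_integral_def by simp
qed

definition error_term :: "nat \<Rightarrow> nat \<Rightarrow> (nat \<Rightarrow> nat \<Rightarrow> real) \<Rightarrow> (nat \<Rightarrow> 'a) \<Rightarrow> real" where
  "error_term i j x y = bit_error (x i) j (y i)"

definition rank_term :: "nat \<Rightarrow> nat \<Rightarrow> nat \<Rightarrow> nat \<Rightarrow> (nat \<Rightarrow> nat \<Rightarrow> real) \<Rightarrow> (nat \<Rightarrow> 'a) \<Rightarrow> real" where
  "rank_term i j k l x y = llr_precedes (k < i \<or> (k = i \<and> l < j)) l j (y k) (y i) * bit_error (x i) j (y i)"

lemma orbgrand_D_eq_sum_terms:
  "orbgrand_D N m (\<lambda>i j. T j (y i)) x = 1 / (real (m * N))\<^sup>2 *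
     (\<Sum>i<N. \<Sum>j<m. error_term i j x y + (\<Sum>k<N. \<Sum>l<m. rank_term i j k l x y))"
proof -
  have "real (rank_of (\<lambda>k l. \<bar>T l (y k)\<bar>) N m i j) * bit_error (x i) j (y i)
      = error_term i j x y + (\<Sum>k<N. \<Sum>l<m. rank_term i j k l x y)" for i j
    unfolding rank_of_def error_term_def rank_term_def llr_precedes_def
    by (simp add: real_card_pairs_eq_sum sum_distrib_right distrib_right)
  then show ?thesis
    unfolding orbgrand_D_def bit_error_def[symmetric]
    by (simp add: sum_divide_distrib[symmetric] power2_eq_square)
qed

lemma error_term_measurable: "i < N \<Longrightarrow> error_term i j x \<in> borel_measurable (outputs N)"
  unfolding error_term_def[abs_def] using measurable_compose[OF measurable_output bit_error_measurable]
  by simp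

lemma rank_term_measurable:
  "i < N \<Longrightarrow> k < N \<Longrightarrow> rank_term i j k l x \<in> borel_measurable (outputs N)"
  unfolding rank_term_def[abs_def]
  using measurable_two_outputs[OF _ _ bit_error_llr_precedes_measurable, of i N k "x i" j]
  by (simp add: mult.commute)

lemma error_term_01: "0 \<le> error_term i j x y" "error_term i j x y \<le> 1"
  unfolding error_term_def bit_error_def by simp_all

lemma rank_term_01: "0 \<le> rank_term i j k l x y" "rank_term i j k l x y \<le> 1"
  unfolding rank_term_def bit_error_def llr_precedes_def by simp_all

lemma error_term_expect_integrable: "i < N \<Longrightarrow> expect_integrable N (error_term i j)"
  by (rule expect_integrable_bounded) (simp_all add: error_term_measurable abs_le_iff error_term_01
      order_trans[OF _ error_term_01(1)])

lemma rank_term_expect_integrable: "i < N \<Longrightarrow> k < N \<Longrightarrow> expect_integrable N (rank_term i j k l)"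
  by (rule expect_integrable_bounded) (simp_all add: rank_term_measurable abs_le_iff rank_term_01
      order_trans[OF _ rank_term_01(1)])

lemma expect_integrable_double_sum:
  assumes "finite K" "finite L" "\<And>k l. k \<in> K \<Longrightarrow> l \<in> L \<Longrightarrow> expect_integrable N (f k l)"
  shows "expect_integrable N (\<lambda>x y. \<Sum>k\<in>K. \<Sum>l\<in>L. f k l x y)"
  using assms by (intro expect_integrable_sum) auto

lemma expect_double_sum:
  assumes "finite K" "finite L" "\<And>k l. k \<in> K \<Longrightarrow> l \<in> L \<Longrightarrow> expect_integrable N (f k l)"
  shows "expect N (\<lambda>x y. \<Sum>k\<in>K. \<Sum>l\<in>L. f k l x y) = (\<Sum>k\<in>K. \<Sum>l\<in>L. expect N (f k l))"
  using assms by (simp add: expect_sum expect_integrable_sum)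

lemma expected_D_eq_sum_expect:
  "expected_D m S \<mu> p N = 1 / (real (m * N))\<^sup>2 *
     (\<Sum>i<N. \<Sum>j<m. expect N (error_term i j) + (\<Sum>k<N. \<Sum>l<m. expect N (rank_term i j k l)))"
proof -
  have rank_integrable: "expect_integrable N (\<lambda>x y. \<Sum>k<N. \<Sum>l<m. rank_term i j k l x y)"
    if "i < N" for i j
    using that by (intro expect_integrable_double_sum rank_term_expect_integrable) auto
  have rank_expect: "expect N (\<lambda>x y. \<Sum>k<N. \<Sum>l<m. rank_term i j k l x y)
      = (\<Sum>k<N. \<Sum>l<m. expect N (rank_term i j k l))" if "i < N" for i j
    using that by (intro expect_double_sum rank_term_expect_integrable) auto
  have "expect N (\<lambda>x y. \<Sum>i<N. \<Sum>j<m. error_term i j x y + (\<Sum>k<N. \<Sum>l<m. rank_term i j k l x y))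
      = (\<Sum>i<N. \<Sum>j<m. expect N (\<lambda>x y. error_term i j x y + (\<Sum>k<N. \<Sum>l<m. rank_term i j k l x y)))"
    by (intro expect_double_sum expect_integrable_add error_term_expect_integrable rank_integrable) auto
  also have "\<dots> = (\<Sum>i<N. \<Sum>j<m. expect N (error_term i j) + (\<Sum>k<N. \<Sum>l<m. expect N (rank_term i j k l)))"
    by (intro sum.cong refl) (simp add: expect_add error_term_expect_integrable rank_integrable rank_expect)
  finally show ?thesis
    unfolding expected_D_eq_expect orbgrand_D_eq_sum_terms expect_cmult by simp
qed

lemma sum_rank_terms_expect:
  assumes i: "i < N" and j: "j < m"
  shows "(\<Sum>k<N. \<Sum>l<m. expect N (rank_term i j k l))
    = (\<Sum>l<m. expect N (rank_term i j i l)) + (real N - 1) * (real m * bit_limit j)"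
proof -
  have distinct: "(\<Sum>l<m. expect N (rank_term i j k l)) = real m * bit_limit j"
    if "k \<in> {..<N} - {i}" for k
    using that i j unfolding rank_term_def[abs_def]
    by (simp add: expect_rank_term_distinct sum_integrals_Psi_eq_bit_limit)
  have "(\<Sum>k<N. \<Sum>l<m. expect N (rank_term i j k l))
      = (\<Sum>l<m. expect N (rank_term i j i l)) + (\<Sum>k\<in>{..<N} - {i}. \<Sum>l<m. expect N (rank_term i j k l))"
    using i by (simp add: sum.remove)
  also have "(\<Sum>k\<in>{..<N} - {i}. \<Sum>l<m. expect N (rank_term i j k l)) = (real N - 1) * (real m * bit_limit j)"
    using i by (simp add: distinct of_nat_diff)
  finally show ?thesis .
qed

text \<open>The \<open>O(N)\<close> rank contributions of a symbol to itself are negligible against the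
  normalisation \<open>(mN)\<^sup>2\<close>.\<close>
lemma expected_D_approx:
  assumes N: "1 \<le> N"
  shows "\<bar>expected_D m S \<mu> p N - (1 - 1 / real N) * (\<Sum>j<m. bit_limit j) / real m\<bar>
    \<le> (1 + real m) / (real m * real N)"
proof -
  define r where "r i j = expect N (error_term i j) + (\<Sum>l<m. expect N (rank_term i j i l))" for i j
  have r_bounds: "0 \<le> r i j \<and> r i j \<le> 1 + real m" if "i < N" for i j
  proof -
    have "0 \<le> expect N (rank_term i j i l) \<and> expect N (rank_term i j i l) \<le> 1" for l
      using that by (intro conjI expect_unit_interval) (simp_all add: rank_term_measurable rank_term_01)
    moreover have "0 \<le> expect N (error_term i j) \<and> expect N (error_term i j) \<le> 1"
      using that by (intro conjI expect_unit_interval) (simp_all add: error_term_measurable error_term_01)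
    ultimately show ?thesis
      unfolding r_def using sum_mono[of "{..<m}" "\<lambda>l. expect N (rank_term i j i l)" "\<lambda>_. 1"]
      by (auto intro!: add_nonneg_nonneg sum_nonneg add_mono)
  qed
  have r_sum_nonneg: "0 \<le> (\<Sum>i<N. \<Sum>j<m. r i j)"
    using r_bounds by (auto intro!: sum_nonneg)
  have m: "0 < real m"
    using m_pos by simp
  have "expected_D m S \<mu> p N = 1 / (real (m * N))\<^sup>2 * (\<Sum>i<N. \<Sum>j<m. r i j + (real N - 1) * (real m * bit_limit j))"
    unfolding expected_D_eq_sum_expect r_def by (simp add: sum_rank_terms_expect add.assoc)
  also have "\<dots> = 1 / (real (m * N))\<^sup>2 *
      ((\<Sum>i<N. \<Sum>j<m. r i j) + real N * (real N - 1) * real m * (\<Sum>j<m. bit_limit j))"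
    by (simp add: sum.distrib sum_distrib_left mult.assoc)
  also have "\<dots> = 1 / (real (m * N))\<^sup>2 * (\<Sum>i<N. \<Sum>j<m. r i j) + (1 - 1 / real N) * (\<Sum>j<m. bit_limit j) / real m"
    using N m by (simp add: field_simps power2_eq_square)
  finally have "\<bar>expected_D m S \<mu> p N - (1 - 1 / real N) * (\<Sum>j<m. bit_limit j) / real m\<bar>
      = 1 / (real (m * N))\<^sup>2 * (\<Sum>i<N. \<Sum>j<m. r i j)"
    using r_sum_nonneg by simp
  also have "\<dots> \<le> 1 / (real (m * N))\<^sup>2 * (\<Sum>i<N. \<Sum>j<m. 1 + real m)"
    using r_bounds by (intro mult_left_mono sum_mono) auto
  also have "\<dots> = (1 + real m) / (real m * real N)"
    using N m by (simp add: field_simps power2_eq_square)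
  finally show ?thesis .
qed

lemma expected_D_tendsto: "(\<lambda>N. expected_D m S \<mu> p N) \<longlonglongrightarrow> (\<Sum>j<m. bit_limit j) / real m"
proof -
  let ?C = "(\<Sum>j<m. bit_limit j) / real m"
  have "(\<lambda>N. expected_D m S \<mu> p N - (1 - 1 / real N) * ?C) \<longlonglongrightarrow> 0"
  proof (rule Lim_null_comparison)
    show "\<forall>\<^sub>F N in sequentially. norm (expected_D m S \<mu> p N - (1 - 1 / real N) * ?C)
        \<le> (1 + real m) / real m / real N"
      using expected_D_approx by (intro eventually_sequentiallyI[of 1]) (simp add: divide_divide_eq_left)
    show "(\<lambda>N. (1 + real m) / real m / real N) \<longlonglongrightarrow> 0"
      by (rule lim_const_over_n)
  qed
  moreover have "(\<lambda>N. (1 - 1 / real N) * ?C) \<longlonglongrightarrow> (1 - 0) * ?C"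
    by (intro tendsto_intros lim_const_over_n)
  ultimately show ?thesis
    using tendsto_add by fastforce
qed

end

theorem lemma7:
  fixes m :: nat and S :: "'s set" and \<mu> :: "(nat \<Rightarrow> real) \<Rightarrow> 's"
    and p :: "'s \<Rightarrow> 'a::euclidean_space \<Rightarrow> real"
  assumes m: "m \<ge> 1"
    and S: "finite S" "card S = 2 ^ m"
    and mu: "bij_betw \<mu> (bitvecs m) S"
    and dens: "\<forall>s\<in>S. p s \<in> borel_measurable lborel \<and> (\<forall>y. p s y \<ge> 0)
                 \<and> integrable lborel (p s) \<and> integral\<^sup>L lborel (p s) = 1"
    and qpos: "\<forall>j<m. \<forall>y. qbit m S \<mu> p j 1 y > 0 \<and> qbit m S \<mu> p j (-1) y > 0"
    and A1: "\<forall>j<m. \<exists>M1>0. \<exists>a>0. \<exists>S1 :: real poly. \<forall>y. norm y > M1 \<longrightarrow>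
               qbit m S \<mu> p j 1 y < poly S1 (norm y) * exp (- a * norm y) \<and>
               qbit m S \<mu> p j (-1) y < poly S1 (norm y) * exp (- a * norm y)"
    and A2: "\<forall>j<m. \<exists>M2>0. \<exists>S2 :: real poly. \<forall>y. norm y > M2 \<longrightarrow>
               \<bar>llr m S \<mu> p j y\<bar> < poly S2 (norm y)"
    and A3: "\<forall>j<m. smooth_cdf (Psi m S \<mu> p j)" "smooth_cdf (Psibar m S \<mu> p)"
  shows "(\<lambda>N. expected_D m S \<mu> p N) \<longlonglongrightarrow>
    (1 / real m) * (\<Sum>j<m.
       1/2 * set_lebesgue_integral lborel {y. qbit m S \<mu> p j 1 y < qbit m S \<mu> p j (-1) y}
               (\<lambda>y. Psibar m S \<mu> p \<bar>llr m S \<mu> p j y\<bar> * qbit m S \<mu> p j 1 y)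
     + 1/2 * set_lebesgue_integral lborel {y. qbit m S \<mu> p j 1 y > qbit m S \<mu> p j (-1) y}
               (\<lambda>y. Psibar m S \<mu> p \<bar>llr m S \<mu> p j y\<bar> * qbit m S \<mu> p j (-1) y))"
proof -
  interpret bicm m S \<mu> p
    using m mu dens qpos A3(1) by unfold_locales auto
  show ?thesis
    using expected_D_tendsto by (simp add: bit_limit_eq_set_integrals)
qed

end
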